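(* Let $\mathrm{X}$ be a reflexive Banach space, let $\ell$ be a Schauder sequence space such that $\ell^*$ is also a Schauder sequence space. Let $G=\{g_i\}\subset\mathrm{X}^*$ be an $\ell$-Bessel for $\mathrm{X}$ and $F=\{f_i\}\subset\mathrm{X}$ be an $\ell^*$-Bessel for $\mathrm{X}^*$. Then for every $g\in\mathrm{X}^*$ the series $\sum_i\langle f_i,g\rangle g_i$ converges in $\mathrm{X}^*$; that is, $(F,G)$ is a pair Bessel for $\mathrm{X}^*$.
   Context: $\mathrm{X}$ is a reflexive Banach space, $\mathrm{X}^{**}$ is identified with $\mathrm{X}$, and $\langle f,g\rangle:=g(f)$ for $f\in\mathrm{X}$, $g\in\mathrm{X}^*$. Series are summed in the natural order of $\mathbb{N}$. A BK-space is a Banach space of scalar sequences indexed by $\mathbb{N}$ with continuous coordinate functionals. With $\delta_i=\{\delta_{ij}\}_j$ the canonical vectors, a Schauder sequence space is a BK-space in which $\{\delta_i\}$ is a Schauder basis; its dual $\ell^*$ is identified isometrically with the sequence space $\{\{\phi(\delta_i)\}:\phi\in\ell^*\}$ (normed by $\|\phi\|$), acting by $\phi(\{c_i\})=\sum_i\phi(\delta_i)c_i$. $G=\{g_i\}\subset\mathrm{X}^*$ is an $\ell$-Bessel for $\mathrm{X}$ if there is $B>0$ with $\{\langle f,g_i\rangle\}\in\ell$ and $\|\{\langle f,g_i\rangle\}\|_\ell\le B\|f\|$ for all $f\in\mathrm{X}$; $F=\{f_i\}\subset\mathrm{X}$ is an $\ell^*$-Bessel for $\mathrm{X}^*$ if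 there is $B>0$ with $\{\langle f_i,g\rangle\}\in\ell^*$ and $\|\{\langle f_i,g\rangle\}\|_{\ell^*}\le B\|g\|$ for all $g\in\mathrm{X}^*$. $(F,G)$ is a pair Bessel for $\mathrm{X}^*$ if $S_{GF}:\mathrm{X}^*\to\mathrm{X}^*$, $S_{GF}(g)=\sum_i\langle f_i,g\rangle g_i$, is well defined. *)

theory Defs
  imports "HOL-Analysis.Analysis"
begin

text \<open>Real scalars. A sequence space is a set L of real sequences with a function N
  playing the role of the norm on L.\<close>

definition delta :: "nat \<Rightarrow> nat \<Rightarrow> real" where
  "delta i = (\<lambda>j. if i = j then 1 else 0)"

definition trunc_seq :: "nat \<Rightarrow> (nat \<Rightarrow> real) \<Rightarrow> nat \<Rightarrow> real" where
  "trunc_seq n c = (\<lambda>i. if i < n then c i else 0)"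

definition BK_space :: "(nat \<Rightarrow> real) set \<Rightarrow> ((nat \<Rightarrow> real) \<Rightarrow> real) \<Rightarrow> bool" where
  "BK_space L N \<longleftrightarrow>
     (\<lambda>i. 0) \<in> L \<and> (\<forall>c\<in>L. \<forall>d\<in>L. (\<lambda>i. c i + d i) \<in> L) \<and> (\<forall>a. \<forall>c\<in>L. (\<lambda>i. a * c i) \<in> L) \<and>
     (\<forall>c\<in>L. 0 \<le> N c \<and> (N c = 0 \<longleftrightarrow> c = (\<lambda>i. 0))) \<and>
     (\<forall>a. \<forall>c\<in>L. N (\<lambda>i. a * c i) = \<bar>a\<bar> * N c) \<and>
     (\<forall>c\<in>L. \<forall>d\<in>L. N (\<lambda>i. c i + d i) \<le> N c + N d) \<and>
     (\<forall>x. (\<forall>n. x n \<in> L) \<and> (\<forall>e>0. \<exists>M. \<forall>m\<ge>M. \<forall>n\<ge>M. N (\<lambda>i. x m i - x n i) < e)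
          \<longrightarrow> (\<exists>c\<in>L. (\<lambda>n. N (\<lambda>i. x n i - c i)) \<longlonglongrightarrow> 0)) \<and>
     (\<forall>i. \<exists>K. \<forall>c\<in>L. \<bar>c i\<bar> \<le> K * N c)"

text \<open>Schauder sequence space: BK-space in which the canonical vectors form a Schauder
  basis (by continuity of coordinates, the expansion coefficients of c are the c i).\<close>
definition schauder_seq_space :: "(nat \<Rightarrow> real) set \<Rightarrow> ((nat \<Rightarrow> real) \<Rightarrow> real) \<Rightarrow> bool" where
  "schauder_seq_space L N \<longleftrightarrow> BK_space L N \<and> (\<forall>i. delta i \<in> L) \<and>
     (\<forall>c\<in>L. (\<lambda>n. N (\<lambda>i. c i - trunc_seq n c i)) \<longlonglongrightarrow> 0)"

text \<open>The dual sequence space: sequences d = (phi(delta i))_i for bounded linear phi on L;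
  phi acts by c \<mapsto> \<Sum>i. d i * c i.\<close>
definition dual_seq :: "(nat \<Rightarrow> real) set \<Rightarrow> ((nat \<Rightarrow> real) \<Rightarrow> real) \<Rightarrow> (nat \<Rightarrow> real) set" where
  "dual_seq L N = {d. (\<forall>c\<in>L. summable (\<lambda>i. d i * c i)) \<and>
                      (\<exists>B. \<forall>c\<in>L. \<bar>\<Sum>i. d i * c i\<bar> \<le> B * N c)}"

definition dual_norm :: "(nat \<Rightarrow> real) set \<Rightarrow> ((nat \<Rightarrow> real) \<Rightarrow> real) \<Rightarrow> (nat \<Rightarrow> real) \<Rightarrow> real" where
  "dual_norm L N d = Sup {\<bar>\<Sum>i. d i * c i\<bar> | c. c \<in> L \<and> N c \<le> 1}"

definition reflexive_space :: "'a::real_normed_vector itself \<Rightarrow> bool" where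
  "reflexive_space _ \<longleftrightarrow>
     (\<forall>\<Phi> :: ('a \<Rightarrow>\<^sub>L real) \<Rightarrow>\<^sub>L real. \<exists>x::'a. \<forall>g. blinfun_apply \<Phi> g = blinfun_apply g x)"

definition ell_bessel :: "(nat \<Rightarrow> real) set \<Rightarrow> ((nat \<Rightarrow> real) \<Rightarrow> real) \<Rightarrow>
    (nat \<Rightarrow> ('a::real_normed_vector \<Rightarrow>\<^sub>L real)) \<Rightarrow> bool" where
  "ell_bessel L N G \<longleftrightarrow> (\<exists>B>0. \<forall>f::'a. (\<lambda>i. blinfun_apply (G i) f) \<in> L \<and> N (\<lambda>i. blinfun_apply (G i) f) \<le> B * norm f)"

definition dual_ell_bessel :: "(nat \<Rightarrow> real) set \<Rightarrow> ((nat \<Rightarrow> real) \<Rightarrow> real) \<Rightarrow>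
    (nat \<Rightarrow> 'a::real_normed_vector) \<Rightarrow> bool" where
  "dual_ell_bessel L N F \<longleftrightarrow> (\<exists>B>0. \<forall>g::'a \<Rightarrow>\<^sub>L real.
       (\<lambda>i. blinfun_apply g (F i)) \<in> dual_seq L N \<and> dual_norm L N (\<lambda>i. blinfun_apply g (F i)) \<le> B * norm g)"

definition pair_bessel :: "(nat \<Rightarrow> 'a::real_normed_vector) \<Rightarrow> (nat \<Rightarrow> ('a \<Rightarrow>\<^sub>L real)) \<Rightarrow> bool" where
  "pair_bessel F G \<longleftrightarrow> (\<forall>g::'a \<Rightarrow>\<^sub>L real. summable (\<lambda>i. blinfun_apply g (F i) *\<^sub>R G i))"

end

theory Submission
  imports Defs
begin

text \<open>
  Fix g in X* and put d i = g (F i).  Since F is an L*-Bessel sequence,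
  d lies in the dual sequence space L*, and since L* is a Schauder sequence space the
  tails  r n = d - (d truncated at n)  tend to 0 in the norm of L*.  For f in X the
  sequence c = (G i f)_i lies in L with N c \<le> B \<parallel>f\<parallel> (G is L-Bessel), and the n-th partial
  sum S n = \<Sum>i<n. d i g_i satisfies  S n f = \<langle>d, c\<rangle> - \<langle>r n, c\<rangle>.  Hence
      \<parallel>S n - S m\<parallel> \<le> B (\<parallel>r m\<parallel>* + \<parallel>r n\<parallel>*),
  so the partial sums are Cauchy in the Banach space X* and the series converges.
\<close>

lemma BK_space_zero: "BK_space L N \<Longrightarrow> (\<lambda>i. 0) \<in> L \<and> N (\<lambda>i. 0) = 0"
  unfolding BK_space_def by auto

lemma BK_space_add: "BK_space L N \<Longrightarrow> c \<in> L \<Longrightarrow> d \<in> L \<Longrightarrow> (\<lambda>i. c i + d i) \<in> L"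
  unfolding BK_space_def by blast

lemma BK_space_scale: "BK_space L N \<Longrightarrow> c \<in> L \<Longrightarrow> (\<lambda>i. a * c i) \<in> L"
  unfolding BK_space_def by blast

lemma BK_space_norm_scale: "BK_space L N \<Longrightarrow> c \<in> L \<Longrightarrow> N (\<lambda>i. a * c i) = \<bar>a\<bar> * N c"
  unfolding BK_space_def by blast

lemma BK_space_norm_nonneg: "BK_space L N \<Longrightarrow> c \<in> L \<Longrightarrow> 0 \<le> N c"
  unfolding BK_space_def by blast

lemma BK_space_norm_eq_0: "BK_space L N \<Longrightarrow> c \<in> L \<Longrightarrow> N c = 0 \<Longrightarrow> c = (\<lambda>i. 0)"
  unfolding BK_space_def by blast

text \<open>The values of the functional represented by e on the unit ball of L are bounded,
  so the supremum defining the dual norm is a genuine least upper bound.\<close>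
lemma dual_pairing_bdd_above:
  assumes BK: "BK_space L N" and e: "e \<in> dual_seq L N"
  shows "bdd_above {\<bar>\<Sum>i. e i * c i\<bar> | c. c \<in> L \<and> N c \<le> 1}"
proof -
  from e obtain B where B: "\<And>c. c \<in> L \<Longrightarrow> \<bar>\<Sum>i. e i * c i\<bar> \<le> B * N c"
    unfolding dual_seq_def by blast
  have "\<bar>\<Sum>i. e i * c i\<bar> \<le> \<bar>B\<bar>" if "c \<in> L" "N c \<le> 1" for c
  proof -
    have "B * N c \<le> \<bar>B\<bar> * N c"
      using BK_space_norm_nonneg[OF BK \<open>c \<in> L\<close>] by (intro mult_right_mono) auto
    also have "\<dots> \<le> \<bar>B\<bar>" using \<open>N c \<le> 1\<close> by (simp add: mult_left_le)
    finally show ?thesis using B[OF \<open>c \<in> L\<close>] by linarith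
  qed
  then show ?thesis by (intro bdd_aboveI) blast
qed

lemma dual_norm_nonneg:
  assumes BK: "BK_space L N" and e: "e \<in> dual_seq L N"
  shows "0 \<le> dual_norm L N e"
proof -
  have "0 \<in> {\<bar>\<Sum>i. e i * c i\<bar> | c. c \<in> L \<and> N c \<le> 1}"
    using BK_space_zero[OF BK] by (intro CollectI exI[of _ "\<lambda>i. 0"]) auto
  then show ?thesis
    unfolding dual_norm_def using dual_pairing_bdd_above[OF BK e] by (meson cSup_upper)
qed

text \<open>The dual norm is the operator norm: \<bar>\<langle>e, c\<rangle>\<bar> \<le> \<parallel>e\<parallel>* N c.  Proved by rescaling c to
  the unit sphere.\<close>
lemma dual_norm_bound:
  assumes BK: "BK_space L N" and e: "e \<in> dual_seq L N" and c: "c \<in> L"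
  shows "\<bar>\<Sum>i. e i * c i\<bar> \<le> dual_norm L N e * N c"
proof (cases "N c = 0")
  case True
  then show ?thesis using BK_space_norm_eq_0[OF BK c] by simp
next
  case False
  hence pos: "N c > 0" using BK_space_norm_nonneg[OF BK c] by simp
  define u where "u = (\<lambda>i. (1 / N c) * c i)"
  have uL: "u \<in> L" unfolding u_def using BK_space_scale[OF BK c] .
  have "N u = \<bar>1 / N c\<bar> * N c" unfolding u_def using BK_space_norm_scale[OF BK c] .
  then have Nu: "N u = 1" using pos by simp
  have "(\<Sum>i. e i * u i) = (\<Sum>i. (1 / N c) * (e i * c i))"
    unfolding u_def by (simp add: algebra_simps)
  also have "\<dots> = (\<Sum>i. e i * c i) / N c"
    using e c unfolding dual_seq_def by (subst suminf_mult) auto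
  finally have pairing_u: "(\<Sum>i. e i * u i) = (\<Sum>i. e i * c i) / N c" .
  have "\<bar>\<Sum>i. e i * u i\<bar> \<le> dual_norm L N e"
    unfolding dual_norm_def using dual_pairing_bdd_above[OF BK e] uL Nu
    by (intro cSup_upper) auto
  then show ?thesis using pairing_u pos by (simp add: divide_le_eq mult.commute)
qed

definition tail_seq :: "nat \<Rightarrow> (nat \<Rightarrow> real) \<Rightarrow> nat \<Rightarrow> real" where
  "tail_seq n d = (\<lambda>i. d i - trunc_seq n d i)"

text \<open>A BK-space containing the canonical vectors contains all truncations of any sequence,
  being finite linear combinations of canonical vectors.\<close>
lemma trunc_seq_in_space:
  assumes BK: "BK_space D M" and delta: "\<And>i. delta i \<in> D"
  shows "trunc_seq n d \<in> D"
proof (induction n)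
  case 0
  have "trunc_seq 0 d = (\<lambda>i. 0)" unfolding trunc_seq_def by simp
  then show ?case using BK_space_zero[OF BK] by simp
next
  case (Suc n)
  have "(\<lambda>i. trunc_seq n d i + d n * delta n i) \<in> D"
    using BK_space_add[OF BK Suc BK_space_scale[OF BK delta]] .
  moreover have "(\<lambda>i. trunc_seq n d i + d n * delta n i) = trunc_seq (Suc n) d"
    unfolding trunc_seq_def delta_def by (auto simp: fun_eq_iff less_Suc_eq)
  ultimately show ?case by simp
qed

lemma tail_seq_in_space:
  assumes BK: "BK_space D M" and delta: "\<And>i. delta i \<in> D" and d: "d \<in> D"
  shows "tail_seq n d \<in> D"
proof -
  have "(\<lambda>i. d i + (-1) * trunc_seq n d i) \<in> D"
    using BK_space_add[OF BK d BK_space_scale[OF BK trunc_seq_in_space[OF BK delta]]] .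
  then show ?thesis unfolding tail_seq_def by simp
qed

lemma partial_pairing_eq:
  assumes d: "d \<in> dual_seq L N" and c: "c \<in> L"
  shows "(\<Sum>i<n. d i * c i) = (\<Sum>i. d i * c i) - (\<Sum>i. tail_seq n d i * c i)"
proof -
  have trunc_eq: "(\<lambda>i. trunc_seq n d i * c i) = (\<lambda>i. if i < n then d i * c i else 0)"
    unfolding trunc_seq_def by auto
  have sum_d: "summable (\<lambda>i. d i * c i)" using d c unfolding dual_seq_def by blast
  have sum_trunc: "summable (\<lambda>i. trunc_seq n d i * c i)"
    unfolding trunc_eq by (rule summable_finite[of "{..<n}"]) auto
  have "(\<Sum>i. tail_seq n d i * c i) = (\<Sum>i. d i * c i - trunc_seq n d i * c i)"
    unfolding tail_seq_def by (simp add: algebra_simps)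
  also have "\<dots> = (\<Sum>i. d i * c i) - (\<Sum>i. trunc_seq n d i * c i)"
    using suminf_diff[OF sum_d sum_trunc] by simp
  also have "(\<Sum>i. trunc_seq n d i * c i) = (\<Sum>i<n. d i * c i)"
    unfolding trunc_eq by (subst suminf_finite[of "{..<n}"]) auto
  finally show ?thesis by simp
qed

lemma Cauchy_if_vanishing_bound:
  fixes s :: "nat \<Rightarrow> 'a::real_normed_vector"
  assumes bound: "\<And>m n. norm (s n - s m) \<le> t m + t n" and t: "t \<longlonglongrightarrow> 0"
  shows "Cauchy s"
proof (rule CauchyI)
  fix e :: real assume "0 < e"
  then have "e / 2 > 0" by simp
  then obtain M where M: "\<And>n. n \<ge> M \<Longrightarrow> \<bar>t n\<bar> < e / 2"
    using t unfolding LIMSEQ_iff by fastforce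
  have "norm (s m - s n) < e" if "m \<ge> M" "n \<ge> M" for m n
    using bound[of n m] M[OF \<open>m \<ge> M\<close>] M[OF \<open>n \<ge> M\<close>] norm_minus_commute[of "s m" "s n"]
    by linarith
  then show "\<exists>M. \<forall>m\<ge>M. \<forall>n\<ge>M. norm (s m - s n) < e" by blast
qed

text \<open>The partial sums satisfy
  \<parallel>S n - S m\<parallel> \<le> B (\<parallel>tail m d\<parallel>* + \<parallel>tail n d\<parallel>*), because S n f = \<langle>d, c\<rangle> - \<langle>tail n d, c\<rangle>
  with c = (G i f)_i.\<close>
lemma summable_if_dual_tails_vanish:
  fixes G :: "nat \<Rightarrow> ('a::real_normed_vector \<Rightarrow>\<^sub>L real)"
  assumes BK: "BK_space L N"
    and bessel: "ell_bessel L N G"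
    and d: "d \<in> dual_seq L N"
    and tails_in: "\<And>n. tail_seq n d \<in> dual_seq L N"
    and tails_vanish: "(\<lambda>n. dual_norm L N (tail_seq n d)) \<longlonglongrightarrow> 0"
  shows "summable (\<lambda>i. d i *\<^sub>R G i)"
proof -
  obtain B where "B > 0"
    and G: "\<And>f. (\<lambda>i. G i f) \<in> L \<and> N (\<lambda>i. G i f) \<le> B * norm f"
    using bessel unfolding ell_bessel_def by blast
  define S where "S n = (\<Sum>i<n. d i *\<^sub>R G i)" for n
  define t where "t n = B * dual_norm L N (tail_seq n d)" for n
  have tail_bound: "\<bar>\<Sum>i. tail_seq n d i * G i f\<bar> \<le> t n * norm f" for n f
  proof -
    have "\<bar>\<Sum>i. tail_seq n d i * G i f\<bar> \<le> dual_norm L N (tail_seq n d) * N (\<lambda>i. G i f)"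
      using dual_norm_bound[OF BK tails_in] G by blast
    also have "\<dots> \<le> dual_norm L N (tail_seq n d) * (B * norm f)"
      using G dual_norm_nonneg[OF BK tails_in] by (intro mult_left_mono) auto
    finally show ?thesis unfolding t_def by (simp add: ac_simps)
  qed
  have S_apply: "S n f = (\<Sum>i. d i * G i f) - (\<Sum>i. tail_seq n d i * G i f)" for n f
    using partial_pairing_eq[OF d] G unfolding S_def
    by (simp add: blinfun.sum_left blinfun.scaleR_left)
  have "norm (S n - S m) \<le> t m + t n" for m n
  proof (rule norm_blinfun_bound)
    show "0 \<le> t m + t n"
      unfolding t_def using \<open>B > 0\<close> dual_norm_nonneg[OF BK tails_in] by simp
    show "norm ((S n - S m) f) \<le> (t m + t n) * norm f" for f
      using tail_bound[of m f] tail_bound[of n f]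
      by (simp add: S_apply blinfun.diff_left algebra_simps)
  qed
  moreover have "t \<longlonglongrightarrow> 0"
    unfolding t_def using tendsto_mult_right_zero[OF tails_vanish] .
  ultimately have "Cauchy S" by (rule Cauchy_if_vanishing_bound)
  then show ?thesis
    unfolding summable_iff_convergent S_def Cauchy_convergent_iff .
qed

theorem mainTheorem2:
  fixes L :: "(nat \<Rightarrow> real) set" and N :: "(nat \<Rightarrow> real) \<Rightarrow> real"
    and F :: "nat \<Rightarrow> 'a::banach" and G :: "nat \<Rightarrow> ('a \<Rightarrow>\<^sub>L real)"
  assumes "reflexive_space TYPE('a)"
    and "schauder_seq_space L N"
    and "schauder_seq_space (dual_seq L N) (dual_norm L N)"
    and "ell_bessel L N G"
    and "dual_ell_bessel L N F"
  shows "pair_bessel F G"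
  unfolding pair_bessel_def
proof
  fix g :: "'a \<Rightarrow>\<^sub>L real"
  define d where "d = (\<lambda>i. g (F i))"
  have BK: "BK_space L N" using assms(2) unfolding schauder_seq_space_def by blast
  have BK_dual: "BK_space (dual_seq L N) (dual_norm L N)"
    and delta: "\<And>i. delta i \<in> dual_seq L N"
    and schauder: "\<And>c. c \<in> dual_seq L N
                     \<Longrightarrow> (\<lambda>n. dual_norm L N (\<lambda>i. c i - trunc_seq n c i)) \<longlonglongrightarrow> 0"
    using assms(3) unfolding schauder_seq_space_def by blast+
  have d_dual: "d \<in> dual_seq L N"
    using assms(5) unfolding dual_ell_bessel_def d_def by blast
  have "summable (\<lambda>i. d i *\<^sub>R G i)"
  proof (rule summable_if_dual_tails_vanish[OF BK assms(4) d_dual])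
    show "tail_seq n d \<in> dual_seq L N" for n
      using tail_seq_in_space[OF BK_dual delta d_dual] .
    show "(\<lambda>n. dual_norm L N (tail_seq n d)) \<longlonglongrightarrow> 0"
      unfolding tail_seq_def using schauder[OF d_dual] .
  qed
  then show "summable (\<lambda>i. g (F i) *\<^sub>R G i)" unfolding d_def .
qed

end
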